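(* Let $t\geq 1$ and let $M$ be a Sidon set in $\mathbb{F}_2^t$ with $|M| > s_{\max}(t-1)$. Then (a) $\{m_1+m_2+m_3+m_4 : m_1,m_2,m_3,m_4\in M\} = \mathbb{F}_2^t$; and (b) $\dim \langle M\rangle = \dim \langle \{m_1+m_2 : m_1,m_2\in M,\ m_1\neq m_2\}\rangle = t$, where $\langle\cdot\rangle$ denotes linear span.
   Context: $\mathbb{F}_2^t$ is the $t$-dimensional vector space over $\mathbb{F}_2$. A subset $M\subseteq \mathbb{F}_2^t$ is Sidon if $m_1+m_2\neq m_3+m_4$ for all pairwise distinct $m_1,m_2,m_3,m_4\in M$. $s_{\max}(t)$ denotes the maximum size of a Sidon set in $\mathbb{F}_2^t$ (with $s_{\max}(0)=1$). In (a) the $m_i$ need not be distinct. *)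

theory Defs
  imports Main HOL.Vector_Spaces "HOL-Library.Z2" "HOL-Library.Function_Algebras"
begin

text \<open>Vectors of F_2^t are modelled as functions nat \<Rightarrow> bit vanishing at all
 coordinates i \<ge> t; addition is pointwise (Function_Algebras).\<close>

definition F2 :: "nat \<Rightarrow> (nat \<Rightarrow> bit) set" where
  "F2 t = {v. \<forall>i\<ge>t. v i = 0}"

definition f2scale :: "bit \<Rightarrow> (nat \<Rightarrow> bit) \<Rightarrow> (nat \<Rightarrow> bit)" where
  "f2scale c v = (\<lambda>i. c * v i)"

interpretation f2: vector_space f2scale
  by unfold_locales (auto simp: f2scale_def fun_eq_iff algebra_simps)

definition sidon :: "(nat \<Rightarrow> bit) set \<Rightarrow> bool" where
  "sidon M \<longleftrightarrow> (\<forall>m1\<in>M. \<forall>m2\<in>M. \<forall>m3\<in>M. \<forall>m4\<in>M.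
      distinct [m1, m2, m3, m4] \<longrightarrow> m1 + m2 \<noteq> m3 + m4)"

definition s_max :: "nat \<Rightarrow> nat" where
  "s_max t = Max {card M | M. M \<subseteq> F2 t \<and> sidon M}"

end

theory Submission
  imports Defs
begin

text \<open>If some x \<in> F_2^t were not a sum of four elements of M, collapse F_2^t onto
  F_2^(t-1) by a linear map with kernel {0, x}.  Two elements of M with the same image
  would sum to x, and a violation of the Sidon property in the image would give
  m1 + m2 + m3 + m4 = x; both are excluded, since a + b = a + b + a + a is itself a
  four-fold sum.  So the image is a Sidon set of size |M| > s_max(t-1), impossible.
  Once every vector is a four-fold sum m1 + m2 + m3 + m4 = (m1 + m2) + (m3 + m4), both M
  and its pairwise sums span F_2^t.\<close>

declare add_bit_eq_xor [simp del] mult_bit_eq_and [simp del]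

lemma bit_add_self [simp]: "(a::bit) + a = 0"
  by (cases a) simp_all

lemma fun_bit_add_self [simp]: "(v::nat \<Rightarrow> bit) + v = 0"
  by (simp add: fun_eq_iff)

lemma fun_bit_add_eq_0_iff: "(a::nat \<Rightarrow> bit) + b = 0 \<longleftrightarrow> a = b"
  by (metis add.assoc add_0_right fun_bit_add_self)

lemma F2_add: "a \<in> F2 t \<Longrightarrow> b \<in> F2 t \<Longrightarrow> a + b \<in> F2 t"
  by (simp add: F2_def)

lemma subspace_F2: "f2.subspace (F2 t)"
  by (rule f2.subspaceI) (auto simp: F2_def f2scale_def)

lemma finite_F2: "finite (F2 t)"
proof -
  have "F2 t \<subseteq> (\<lambda>S i. if i \<in> S then 1 else 0) ` Pow {..<t}"
  proof
    fix v assume v: "v \<in> F2 t"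
    have "v = (\<lambda>i. if i \<in> {i. v i = 1} then 1 else 0)"
      by (auto simp: fun_eq_iff)
    moreover have "{i. v i = 1} \<in> Pow {..<t}"
      using v by (auto simp: F2_def) (metis not_le zero_neq_one)
    ultimately show "v \<in> (\<lambda>S i. if i \<in> S then 1 else 0) ` Pow {..<t}" by blast
  qed
  then show ?thesis by (rule finite_subset) simp
qed

definition unit_vec :: "nat \<Rightarrow> nat \<Rightarrow> bit" where
  "unit_vec j = (\<lambda>i. if i = j then 1 else 0)"

lemma independent_unit_vecs: "f2.independent (unit_vec ` A)"
proof
  assume "f2.dependent (unit_vec ` A)"
  then obtain j where "j \<in> A" and j: "unit_vec j \<in> f2.span (unit_vec ` A - {unit_vec j})"
    unfolding f2.dependent_def by blast
  have "f2.subspace {v. v j = 0}"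
    by (rule f2.subspaceI) (auto simp: f2scale_def)
  moreover have "unit_vec ` A - {unit_vec j} \<subseteq> {v. v j = 0}"
    by (auto simp: unit_vec_def)
  ultimately have "unit_vec j \<in> {v. v j = 0}"
    using j f2.span_minimal by blast
  then show False by (simp add: unit_vec_def)
qed

lemma span_unit_vecs: "f2.span (unit_vec ` {..<t}) = F2 t"
proof (induction t)
  case 0
  have "F2 0 = {0}" by (auto simp: F2_def fun_eq_iff)
  then show ?case by simp
next
  case (Suc t)
  show ?case
  proof
    have "unit_vec ` {..<Suc t} \<subseteq> F2 (Suc t)" by (auto simp: F2_def unit_vec_def)
    with subspace_F2 show "f2.span (unit_vec ` {..<Suc t}) \<subseteq> F2 (Suc t)"
      by (rule f2.span_minimal[rotated])
  next
    show "F2 (Suc t) \<subseteq> f2.span (unit_vec ` {..<Suc t})"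
    proof
      fix v assume v: "v \<in> F2 (Suc t)"
      define e where "e = f2scale (v t) (unit_vec t)"
      have "v + e \<in> F2 t"
        using v by (auto simp: F2_def e_def f2scale_def unit_vec_def)
      moreover have "f2.span (unit_vec ` {..<t}) \<subseteq> f2.span (unit_vec ` {..<Suc t})"
        by (intro f2.span_mono image_mono) auto
      ultimately have "v + e \<in> f2.span (unit_vec ` {..<Suc t})"
        using Suc.IH by blast
      moreover have "e \<in> f2.span (unit_vec ` {..<Suc t})"
        unfolding e_def by (intro f2.span_scale f2.span_base) auto
      moreover have "v = (v + e) + e"
        by (simp add: add.assoc)
      ultimately show "v \<in> f2.span (unit_vec ` {..<Suc t})"
        by (metis f2.span_add)
    qed
  qed
qed

lemma dim_F2: "f2.dim (F2 t) = t"
proof -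
  have "inj_on unit_vec {..<t}"
    by (auto simp: inj_on_def unit_vec_def fun_eq_iff)
  then have "card (unit_vec ` {..<t}) = t"
    by (simp add: card_image)
  then show ?thesis
    using f2.dim_span_eq_card_independent[OF independent_unit_vecs[of "{..<t}"]]
    by (simp add: span_unit_vecs)
qed

lemma card_le_s_max:
  assumes "M \<subseteq> F2 t" and "sidon M"
  shows "card M \<le> s_max t"
proof -
  have "{card M | M. M \<subseteq> F2 t \<and> sidon M} \<subseteq> card ` Pow (F2 t)"
    by blast
  then have "finite {card M | M. M \<subseteq> F2 t \<and> sidon M}"
    using finite_F2 finite_subset by blast
  then show ?thesis
    unfolding s_max_def using assms by (intro Max_ge) blast+
qed

text \<open>collapse j x v is v + v_j x with coordinate j deleted; for x j = 1 and j < t it is a linear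
  map F_2^t \<rightarrow> F_2^(t-1) with kernel {0, x}.\<close>

definition collapse :: "nat \<Rightarrow> (nat \<Rightarrow> bit) \<Rightarrow> (nat \<Rightarrow> bit) \<Rightarrow> nat \<Rightarrow> bit" where
  "collapse j x v = (\<lambda>i. let k = if i < j then i else Suc i in v k + v j * x k)"

lemma collapse_add: "collapse j x (a + b) = collapse j x a + collapse j x b"
  by (simp add: collapse_def fun_eq_iff Let_def algebra_simps)

lemma collapse_eq_0D:
  assumes "x j = 1" and "collapse j x v = 0"
  shows "v = 0 \<or> v = x"
proof -
  have "v k = v j * x k" for k
  proof (cases "k = j")
    case True
    then show ?thesis using assms(1) by simp
  next
    case False
    define i where "i = (if k < j then k else k - 1)"
    have "(if i < j then i else Suc i) = k"
      using False by (auto simp: i_def)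
    then have "v k + v j * x k = 0"
      using fun_cong[OF assms(2), of i] by (simp add: collapse_def Let_def)
    then show ?thesis
      by (metis add_left_cancel bit_add_self)
  qed
  then show ?thesis
    by (cases "v j") (auto simp: fun_eq_iff)
qed

lemma collapse_eqD:
  assumes "x j = 1" and "collapse j x a = collapse j x b"
  shows "a = b \<or> a + b = x"
proof -
  have "collapse j x (a + b) = 0"
    using assms(2) by (simp add: collapse_add)
  then show ?thesis
    using collapse_eq_0D[where x = x and j = j, OF assms(1)] fun_bit_add_eq_0_iff by blast
qed

lemma collapse_F2:
  "j < t \<Longrightarrow> x \<in> F2 t \<Longrightarrow> v \<in> F2 t \<Longrightarrow> collapse j x v \<in> F2 (t - 1)"
  by (auto simp: F2_def collapse_def)

definition fourfold_sums :: "(nat \<Rightarrow> bit) set \<Rightarrow> (nat \<Rightarrow> bit) set" where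
  "fourfold_sums M = {m1 + m2 + m3 + m4 | m1 m2 m3 m4. m1 \<in> M \<and> m2 \<in> M \<and> m3 \<in> M \<and> m4 \<in> M}"

lemma pair_sum_in_fourfold_sums:
  assumes "a \<in> M" and "b \<in> M"
  shows "a + b \<in> fourfold_sums M"
proof -
  have "a + b = a + b + a + a"
    by (simp only: add.assoc fun_bit_add_self add_0_right)
  then show ?thesis
    using assms unfolding fourfold_sums_def by blast
qed

lemma fourfold_sums_F2: "M \<subseteq> F2 t \<Longrightarrow> fourfold_sums M \<subseteq> F2 t"
  by (auto simp: fourfold_sums_def intro!: F2_add)

lemma sidon_image_collapse:
  assumes sidon: "sidon M"
    and additive: "\<And>a b. P (a + b) = P a + P b"
    and kernel: "\<And>a b. P a = P b \<Longrightarrow> a = b \<or> a + b = x"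
    and x: "x \<notin> fourfold_sums M"
  shows "inj_on P M" and "sidon (P ` M)"
proof -
  show "inj_on P M"
  proof (rule inj_onI)
    fix a b assume "a \<in> M" "b \<in> M" "P a = P b"
    then show "a = b"
      using kernel pair_sum_in_fourfold_sums x by blast
  qed
  show "sidon (P ` M)"
    unfolding sidon_def
  proof (intro ballI impI)
    fix p1 p2 p3 p4 assume "p1 \<in> P ` M" "p2 \<in> P ` M" "p3 \<in> P ` M" "p4 \<in> P ` M"
      and distinct: "distinct [p1, p2, p3, p4]"
    then obtain m1 m2 m3 m4 where m: "m1 \<in> M" "m2 \<in> M" "m3 \<in> M" "m4 \<in> M"
      and p: "p1 = P m1" "p2 = P m2" "p3 = P m3" "p4 = P m4" by blast
    have "distinct [m1, m2, m3, m4]"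
      using distinct p by auto
    then have "m1 + m2 \<noteq> m3 + m4"
      using sidon[unfolded sidon_def, rule_format, OF m] by blast
    moreover have "m1 + m2 + (m3 + m4) \<in> fourfold_sums M"
    proof -
      have "m1 + m2 + (m3 + m4) = m1 + m2 + m3 + m4"
        by (simp only: add.assoc)
      then show ?thesis
        using m unfolding fourfold_sums_def by blast
    qed
    ultimately show "p1 + p2 \<noteq> p3 + p4"
      using kernel[of "m1 + m2" "m3 + m4"] x p additive by metis
  qed
qed

lemma fourfold_sums_eq_F2:
  assumes "M \<subseteq> F2 t" and "sidon M" and "card M > s_max (t - 1)"
  shows "fourfold_sums M = F2 t"
proof (rule ccontr)
  assume "fourfold_sums M \<noteq> F2 t"
  with fourfold_sums_F2[OF assms(1)] obtain x where x: "x \<in> F2 t" "x \<notin> fourfold_sums M"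
    by blast
  have "M \<noteq> {}"
    using assms(3) by auto
  then have "0 \<in> fourfold_sums M"
    using pair_sum_in_fourfold_sums by fastforce
  with x have "x \<noteq> 0" by blast
  then obtain j where j: "x j = 1"
    by (auto simp: fun_eq_iff)
  with x have "j < t"
    by (auto simp: F2_def) (metis not_le zero_neq_one)
  let ?P = "collapse j x"
  have "inj_on ?P M" and "sidon (?P ` M)"
    using sidon_image_collapse[where P = ?P, OF assms(2) collapse_add
        collapse_eqD[where x = x and j = j, OF j] x(2)]
    by blast+
  moreover have "?P ` M \<subseteq> F2 (t - 1)"
    using assms(1) collapse_F2[OF \<open>j < t\<close> x(1)] by blast
  ultimately have "card M \<le> s_max (t - 1)"
    using card_le_s_max card_image by metis
  with assms(3) show False by simp
qed

lemma span_eq_F2_if_fourfold_sums_eq_F2: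
  assumes "M \<subseteq> F2 t" and "fourfold_sums M = F2 t"
  shows "f2.span M = F2 t"
proof
  show "f2.span M \<subseteq> F2 t"
    using f2.span_minimal[OF assms(1) subspace_F2] .
  show "F2 t \<subseteq> f2.span M"
  proof
    fix v assume "v \<in> F2 t"
    then obtain m1 m2 m3 m4 where "m1 \<in> M" "m2 \<in> M" "m3 \<in> M" "m4 \<in> M"
      and "v = m1 + m2 + m3 + m4"
      using assms(2) unfolding fourfold_sums_def by blast
    then show "v \<in> f2.span M"
      by (simp add: f2.span_add f2.span_base)
  qed
qed

lemma span_pair_sums_eq_F2_if_fourfold_sums_eq_F2:
  assumes "M \<subseteq> F2 t" and "fourfold_sums M = F2 t"
  shows "f2.span {m1 + m2 | m1 m2. m1 \<in> M \<and> m2 \<in> M \<and> m1 \<noteq> m2} = F2 t"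
    (is "f2.span ?D = _")
proof
  have "?D \<subseteq> F2 t"
    using assms(1) by (auto intro!: F2_add)
  then show "f2.span ?D \<subseteq> F2 t"
    using f2.span_minimal[OF _ subspace_F2] by blast
  have pair_in_span: "a + b \<in> f2.span ?D" if "a \<in> M" "b \<in> M" for a b
    using that by (cases "a = b") (auto intro: f2.span_base simp: f2.span_zero)
  show "F2 t \<subseteq> f2.span ?D"
  proof
    fix v assume "v \<in> F2 t"
    then obtain m1 m2 m3 m4 where m: "m1 \<in> M" "m2 \<in> M" "m3 \<in> M" "m4 \<in> M"
      and "v = m1 + m2 + m3 + m4"
      using assms(2) unfolding fourfold_sums_def by blast
    then have "v = (m1 + m2) + (m3 + m4)"
      by (simp only: add.assoc)
    then show "v \<in> f2.span ?D"
      using f2.span_add[OF pair_in_span[OF m(1,2)] pair_in_span[OF m(3,4)]] by simp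
  qed
qed

theorem theorem1p11:
  fixes t :: nat and M :: "(nat \<Rightarrow> bit) set"
  assumes "t \<ge> 1" and "M \<subseteq> F2 t" and "sidon M"
    and "card M > s_max (t - 1)"
  shows "{m1 + m2 + m3 + m4 | m1 m2 m3 m4. m1 \<in> M \<and> m2 \<in> M \<and> m3 \<in> M \<and> m4 \<in> M} = F2 t \<and>
         f2.dim (f2.span M) = t \<and>
         f2.dim (f2.span {m1 + m2 | m1 m2. m1 \<in> M \<and> m2 \<in> M \<and> m1 \<noteq> m2}) = t"
proof -
  have sums: "fourfold_sums M = F2 t"
    using fourfold_sums_eq_F2[OF assms(2-4)] .
  show ?thesis
    using sums dim_F2 span_eq_F2_if_fourfold_sums_eq_F2[OF assms(2) sums]
      span_pair_sums_eq_F2_if_fourfold_sums_eq_F2[OF assms(2) sums]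
    unfolding fourfold_sums_def by simp
qed

end
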